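(* Suppose $1/n\ll\varepsilon_3\ll1$. Let $G$ be a digraph on $n$ vertices with $\delta^0(G)\geq n/2$ and let $A,B,S,T$ be a partition of $V(G)$ satisfying the $AB$-conditions, with sizes $a,b,s,t$ and $b=a+d$ for some $d>0$. Then $E(B\cup T,B)$ contains a matching of size $d+2$, i.e. $d+2$ pairwise vertex-disjoint edges each going from $B\cup T$ to $B$.
   Context: Digraphs have no loops and at most one edge in each direction between two vertices; $\delta^0$ is the minimum semidegree; $E(X,Y)$ is the set of edges $xy$ with $x\in X,y\in Y$. $d^+_X(x)=|N^+(x)\cap X|$, $d^-_X(x)=|N^-(x)\cap X|$, $d^\pm_X(x)\geq c$ means both $\geq c$ and $d^\pm_X(x)<c$ means both $<c$. $G[A,B]$ is the digraph on $A\cup B$ with edges of $G$ between $A$ and $B$ in either direction. The $AB$-conditions on a partition $A,B,S,T$ of sizes $a,b,s,t$: $a\leq b$, $s\leq t$; $\lfloor n/2\rfloor-\varepsilon_3 n\leq a,b\leq\lceil n/2\rceil+\varepsilon_3n$; $\delta^0(G[A,B])\geq n/50$; $d^\pm_B(x)\geq n/2-\varepsilon_3n$ for all but at most $\varepsilon_3n$ vertices $x\in A$; $d^\pm_A(x)\geq n/2-\varepsilon_3n$ for all but at most $\varepsilon_3n$ vertices $x\in B$; $s+t\leq\varepsilon_3n$; $d^-_A(x),d^+_B(x)\geq n/50$ for all $x\in S$; $d^-_B(x),d^+_A(x)\geq n/50$ for all $x\in T$; if $a<b$ then $d^\pm_B(x)<n/20$ for all $x\in B$, $d^-_B(x)<n/20$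 for all $x\in S$ and $d^+_B(x)<n/20$ for all $x\in T$. The hierarchy $\alpha\ll\beta$ means $\alpha$ is sufficiently small as a function of $\beta$. *)

theory Defs
  imports Complex_Main
begin

text \<open>A digraph: finite vertex set V and edge set E \<subseteq> V \<times> V without loops.
  Using a set of ordered pairs gives at most one edge in each direction.\<close>
definition digraph :: "'a set \<Rightarrow> ('a \<times> 'a) set \<Rightarrow> bool" where
  "digraph V E \<longleftrightarrow> finite V \<and> E \<subseteq> V \<times> V \<and> (\<forall>x. (x, x) \<notin> E)"

definition outdeg_in :: "('a \<times> 'a) set \<Rightarrow> 'a set \<Rightarrow> 'a \<Rightarrow> nat" where
  "outdeg_in E X x = card {y \<in> X. (x, y) \<in> E}"

definition indeg_in :: "('a \<times> 'a) set \<Rightarrow> 'a set \<Rightarrow> 'a \<Rightarrow> nat" where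
  "indeg_in E X x = card {y \<in> X. (y, x) \<in> E}"

definition min_semideg_ge :: "'a set \<Rightarrow> ('a \<times> 'a) set \<Rightarrow> real \<Rightarrow> bool" where
  "min_semideg_ge V E c \<longleftrightarrow>
     (\<forall>x\<in>V. real (outdeg_in E V x) \<ge> c \<and> real (indeg_in E V x) \<ge> c)"

definition bip_edges :: "('a \<times> 'a) set \<Rightarrow> 'a set \<Rightarrow> 'a set \<Rightarrow> ('a \<times> 'a) set" where
  "bip_edges E A B = {(x, y) \<in> E. (x \<in> A \<and> y \<in> B) \<or> (x \<in> B \<and> y \<in> A)}"

definition partition4 :: "'a set \<Rightarrow> 'a set \<Rightarrow> 'a set \<Rightarrow> 'a set \<Rightarrow> 'a set \<Rightarrow> bool" where
  "partition4 V A B S T \<longleftrightarrow> A \<union> B \<union> S \<union> T = V \<and>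
     A \<inter> B = {} \<and> A \<inter> S = {} \<and> A \<inter> T = {} \<and> B \<inter> S = {} \<and> B \<inter> T = {} \<and> S \<inter> T = {}"

definition AB_conditions ::
  "real \<Rightarrow> 'a set \<Rightarrow> ('a \<times> 'a) set \<Rightarrow> 'a set \<Rightarrow> 'a set \<Rightarrow> 'a set \<Rightarrow> 'a set \<Rightarrow> bool" where
  "AB_conditions eps V E A B S T \<longleftrightarrow>
    (let n = real (card V); a = card A; b = card B; s = card S; t = card T;
         AB = A \<union> B; EAB = bip_edges E A B in
     partition4 V A B S T \<and>
     a \<le> b \<and> s \<le> t \<and>
     real_of_int \<lfloor>n / 2\<rfloor> - eps * n \<le> real a \<and> real a \<le> real_of_int \<lceil>n / 2\<rceil> + eps * n \<and>
     real_of_int \<lfloor>n / 2\<rfloor> - eps * n \<le> real b \<and> real b \<le> real_of_int \<lceil>n / 2\<rceil> + eps * n \<and>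
     (\<forall>x\<in>AB. real (outdeg_in EAB AB x) \<ge> n / 50 \<and> real (indeg_in EAB AB x) \<ge> n / 50) \<and>
     real (card {x \<in> A. \<not> (real (outdeg_in E B x) \<ge> n / 2 - eps * n \<and>
                             real (indeg_in E B x) \<ge> n / 2 - eps * n)}) \<le> eps * n \<and>
     real (card {x \<in> B. \<not> (real (outdeg_in E A x) \<ge> n / 2 - eps * n \<and>
                             real (indeg_in E A x) \<ge> n / 2 - eps * n)}) \<le> eps * n \<and>
     real (s + t) \<le> eps * n \<and>
     (\<forall>x\<in>S. real (indeg_in E A x) \<ge> n / 50 \<and> real (outdeg_in E B x) \<ge> n / 50) \<and>
     (\<forall>x\<in>T. real (indeg_in E B x) \<ge> n / 50 \<and> real (outdeg_in E A x) \<ge> n / 50) \<and>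
     (a < b \<longrightarrow>
        (\<forall>x\<in>B. real (outdeg_in E B x) < n / 20 \<and> real (indeg_in E B x) < n / 20) \<and>
        (\<forall>x\<in>S. real (indeg_in E B x) < n / 20) \<and>
        (\<forall>x\<in>T. real (outdeg_in E B x) < n / 20)))"

definition matching_in :: "('a \<times> 'a) set \<Rightarrow> 'a set \<Rightarrow> 'a set \<Rightarrow> ('a \<times> 'a) set \<Rightarrow> bool" where
  "matching_in E X Y M \<longleftrightarrow>
     M \<subseteq> E \<and> (\<forall>(x, y)\<in>M. x \<in> X \<and> y \<in> Y) \<and>
     (\<forall>e\<in>M. \<forall>f\<in>M. e \<noteq> f \<longrightarrow> {fst e, snd e} \<inter> {fst f, snd f} = {})"

end

theory Submission
  imports Defs
begin

(*
  The matching is built greedily, one edge at a time.  Since every vertex has in-degree at least n/2 while |A| + |S| is at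
  most (n - d)/2, every x \<in> B has at least d/2 in-neighbours in B \<union> T.  Conversely,
  the AB-conditions for a < b say that every vertex of B \<union> T has fewer than n/20
  out-neighbours in B.  If a matching M with |M| \<le> d + 1 could not be extended, every
  edge from B \<union> T into B would meet the at most 2(d + 1) vertices covered by M;
  double counting the edges from the covered part of B \<union> T into the uncovered part
  of B then gives (|B| - 2(d+1)) d/2 \<le> 2(d+1) n/20, which is false because |B| is
  about n/2 while d is at most about n/50.
*)

definition covered :: "('a \<times> 'a) set \<Rightarrow> 'a set" where
  "covered M = fst ` M \<union> snd ` M"

lemma finite_covered: "finite M \<Longrightarrow> finite (covered M)"
  unfolding covered_def by simp

lemma card_covered_le:
  assumes "finite M"
  shows "card (covered M) \<le> 2 * card M"
proof -
  have "card (covered M) \<le> card (fst ` M) + card (snd ` M)"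
    unfolding covered_def by (rule card_Un_le)
  also have "\<dots> \<le> card M + card M"
    using card_image_le[OF assms, of fst] card_image_le[OF assms, of snd] by linarith
  finally show ?thesis by simp
qed

lemma matching_in_empty: "matching_in E X Y {}"
  unfolding matching_in_def by simp

lemma matching_in_insert:
  assumes M: "matching_in E X Y M"
    and e: "(u, v) \<in> E" "u \<in> X" "v \<in> Y"
    and free: "u \<notin> covered M" "v \<notin> covered M"
  shows "matching_in E X Y (insert (u, v) M)" and "(u, v) \<notin> M"
proof -
  have disjoint_new: "{fst f, snd f} \<inter> {u, v} = {}" if "f \<in> M" for f
    using that free unfolding covered_def by force
  show "(u, v) \<notin> M"
    using free unfolding covered_def by force
  show "matching_in E X Y (insert (u, v) M)"
    using M e disjoint_new unfolding matching_in_def by (auto simp: Int_commute)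
qed

lemma greedy_matching:
  assumes extend: "\<And>M. matching_in E X Y M \<Longrightarrow> finite M \<Longrightarrow> card M < k \<Longrightarrow>
      \<exists>u v. (u, v) \<in> E \<and> u \<in> X \<and> v \<in> Y \<and> u \<notin> covered M \<and> v \<notin> covered M"
  shows "\<exists>M. matching_in E X Y M \<and> finite M \<and> card M = k"
proof -
  have "\<exists>M. matching_in E X Y M \<and> finite M \<and> card M = j" if "j \<le> k" for j
    using that
  proof (induction j)
    case 0
    show ?case using matching_in_empty by fastforce
  next
    case (Suc j)
    then obtain M where M: "matching_in E X Y M" "finite M" "card M = j" by auto
    with Suc.prems obtain u v where
      uv: "(u, v) \<in> E" "u \<in> X" "v \<in> Y" "u \<notin> covered M" "v \<notin> covered M"
      using extend by fastforce
    have "matching_in E X Y (insert (u, v) M)" "(u, v) \<notin> M"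
      using matching_in_insert[OF M(1) uv] by blast+
    then show ?case using M(2,3) by (intro exI[of _ "insert (u, v) M"]) simp
  qed
  then show ?thesis by simp
qed

lemma edge_double_counting:
  fixes p q :: real
  assumes fin: "finite Y" "finite Z"
    and heads: "\<And>z. z \<in> Z \<Longrightarrow> p \<le> real (indeg_in E Y z)"
    and tails: "\<And>y. y \<in> Y \<Longrightarrow> real (outdeg_in E Z y) \<le> q"
  shows "real (card Z) * p \<le> real (card Y) * q"
proof -
  have count: "(\<Sum>y\<in>Y. outdeg_in E Z y) = (\<Sum>z\<in>Z. indeg_in E Y z)"
    unfolding outdeg_in_def indeg_in_def by (rule sum_multicount_gen[OF fin]) simp
  have "real (card Z) * p = (\<Sum>z\<in>Z. p)" by simp
  also have "\<dots> \<le> (\<Sum>z\<in>Z. real (indeg_in E Y z))" by (rule sum_mono) (rule heads)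
  also have "\<dots> = (\<Sum>y\<in>Y. real (outdeg_in E Z y))" by (metis count of_nat_sum)
  also have "\<dots> \<le> (\<Sum>y\<in>Y. q)" by (rule sum_mono) (rule tails)
  also have "\<dots> = real (card Y) * q" by simp
  finally show ?thesis .
qed

lemma indeg_in_Un_le:
  assumes "finite X" "finite Y"
  shows "indeg_in E (X \<union> Y) x \<le> card X + indeg_in E Y x"
proof -
  have "{y \<in> X \<union> Y. (y, x) \<in> E} \<subseteq> X \<union> {y \<in> Y. (y, x) \<in> E}" by blast
  then have "indeg_in E (X \<union> Y) x \<le> card (X \<union> {y \<in> Y. (y, x) \<in> E})"
    unfolding indeg_in_def using assms by (intro card_mono) auto
  also have "\<dots> \<le> card X + indeg_in E Y x"
    unfolding indeg_in_def by (rule card_Un_le)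
  finally show ?thesis .
qed

lemma card_partition4:
  assumes "partition4 V A B S T" "finite V"
  shows "card V = card A + card B + card S + card T"
  using assms unfolding partition4_def
  by (metis Int_Un_distrib2 Un_empty finite_Un card_Un_disjoint)

text \<open>With minimum in-degree n/2, |B| = |A| + d and |S| \<le> |T|, every vertex of B
  has at least d/2 in-neighbours in B \<union> T: its in-neighbours outside B \<union> T lie in
  A \<union> S, and |A| + |S| \<le> (n - d)/2.\<close>
lemma indeg_from_B_T:
  assumes part: "partition4 V A B S T" and fin: "finite V"
    and semideg: "min_semideg_ge V E (real (card V) / 2)"
    and sizes: "card B = card A + d" "card S \<le> card T"
    and x: "x \<in> B"
  shows "real d / 2 \<le> real (indeg_in E (B \<union> T) x)"
proof -
  have V: "V = (A \<union> S) \<union> (B \<union> T)"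
    using part unfolding partition4_def by auto
  have "real (card V) / 2 \<le> real (indeg_in E V x)"
    using semideg x V unfolding min_semideg_ge_def by auto
  moreover have "indeg_in E V x \<le> card (A \<union> S) + indeg_in E (B \<union> T) x"
    unfolding V using fin V by (intro indeg_in_Un_le) auto
  moreover have "card (A \<union> S) \<le> card A + card S" by (rule card_Un_le)
  moreover have "card V = card A + card B + card S + card T"
    by (rule card_partition4[OF part fin])
  ultimately show ?thesis using sizes by linarith
qed

lemma counting_gap:
  fixes b d n :: real
  assumes "1 \<le> d" "d \<le> 2 + n / 50" "99 * n / 200 \<le> b" "200 \<le> n"
  shows "2 * (d + 1) * (n / 20) < (b - 2 * (d + 1)) * (d / 2)"
proof -
  have "2 * (d + 1) * (n / 20) \<le> (4 * d) * (n / 20)"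
    using assms by (intro mult_right_mono) auto
  also have "\<dots> = (2 * n / 5) * (d / 2)" by simp
  also have "\<dots> < (b - 2 * (d + 1)) * (d / 2)"
  proof (rule mult_strict_right_mono)
    show "2 * n / 5 < b - 2 * (d + 1)" using assms by (simp add: algebra_simps)
  qed (use assms in linarith)
  finally show ?thesis .
qed

lemma small_matching_extends:
  fixes n :: real
  assumes fin: "finite B" "finite T"
    and heads: "\<And>x. x \<in> B \<Longrightarrow> real d / 2 \<le> real (indeg_in E (B \<union> T) x)"
    and tails: "\<And>y. y \<in> B \<union> T \<Longrightarrow> real (outdeg_in E B y) < n / 20"
    and sizes: "1 \<le> d" "real d \<le> 2 + n / 50" "99 * n / 200 \<le> real (card B)" "200 \<le> n"
    and M: "finite M" "card M \<le> d + 1"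
  shows "\<exists>u v. (u, v) \<in> E \<and> u \<in> B \<union> T \<and> v \<in> B \<and> u \<notin> covered M \<and> v \<notin> covered M"
proof (rule ccontr)
  assume no_free_edge: "\<not> ?thesis"
  have blocked: "u \<in> covered M \<or> v \<in> covered M"
    if "(u, v) \<in> E" "u \<in> B \<union> T" "v \<in> B" for u v
    using no_free_edge that by auto
  define Y where "Y = covered M \<inter> (B \<union> T)"
  define Z where "Z = B - covered M"
  have finYZ: "finite Y" "finite Z" using fin unfolding Y_def Z_def by auto
  have "card (covered M) \<le> 2 * card M" by (rule card_covered_le[OF M(1)])
  also have "\<dots> \<le> 2 * (d + 1)" using M(2) by (rule mult_le_mono2)
  finally have "real (card (covered M)) \<le> real (2 * (d + 1))"
    by (rule of_nat_mono)
  then have cov: "real (card (covered M)) \<le> 2 * (real d + 1)"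
    by simp
  text \<open>All in-neighbours in B \<union> T of an uncovered vertex of B are covered.\<close>
  have "real d / 2 \<le> real (indeg_in E Y z)" if z: "z \<in> Z" for z
  proof -
    have "{y \<in> B \<union> T. (y, z) \<in> E} \<subseteq> {y \<in> Y. (y, z) \<in> E}"
      using blocked z unfolding Y_def Z_def by auto
    then have "indeg_in E (B \<union> T) z \<le> indeg_in E Y z"
      unfolding indeg_in_def using finYZ by (intro card_mono) auto
    then show ?thesis using heads[of z] z unfolding Z_def by simp
  qed
  moreover have "real (outdeg_in E Z y) \<le> n / 20" if y: "y \<in> Y" for y
  proof -
    have "outdeg_in E Z y \<le> outdeg_in E B y"
      unfolding outdeg_in_def Z_def using fin by (intro card_mono) auto
    then show ?thesis using tails[of y] y unfolding Y_def by simp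
  qed
  ultimately have count: "real (card Z) * (real d / 2) \<le> real (card Y) * (n / 20)"
    by (rule edge_double_counting[OF finYZ])
  have "real (card Y) \<le> real (card (covered M))"
    unfolding Y_def using finite_covered[OF M(1)] by (simp add: card_mono)
  then have "real (card Y) * (n / 20) \<le> 2 * (real d + 1) * (n / 20)"
    using cov sizes(4) by (intro mult_right_mono) auto
  moreover have "real (card B) - 2 * (real d + 1) \<le> real (card Z)"
    using diff_card_le_card_Diff[OF finite_covered[OF M(1)], of B] cov
    unfolding Z_def by linarith
  then have "(real (card B) - 2 * (real d + 1)) * (real d / 2) \<le> real (card Z) * (real d / 2)"
    by (rule mult_right_mono) simp
  moreover have "2 * (real d + 1) * (n / 20) < (real (card B) - 2 * (real d + 1)) * (real d / 2)"
    by (rule counting_gap) (use sizes in simp_all)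
  ultimately show False
    using count by linarith
qed

lemma AB_conditions_sizes:
  assumes ab: "AB_conditions eps V E A B S T" and fin: "finite V"
    and eps: "eps \<le> 1/100" and n: "200 \<le> card V"
    and b: "card B = card A + d"
  shows "99 * real (card V) / 200 \<le> real (card B)"
    and "real d \<le> 2 + real (card V) / 50"
proof -
  define n where "n = real (card V)"
  from ab have part: "partition4 V A B S T"
    and a_lower: "real_of_int \<lfloor>n / 2\<rfloor> - eps * n \<le> real (card A)"
    and small: "real (card S + card T) \<le> eps * n"
    unfolding AB_conditions_def Let_def n_def by auto
  have "card V = card A + card B + card S + card T"
    by (rule card_partition4[OF part fin])
  then have n_sum: "n = real (card A) + real (card B) + real (card S) + real (card T)"
    unfolding n_def by simp
  have "eps * n \<le> n / 100"
    using eps n mult_right_mono[of eps "1/100" n] unfolding n_def by simp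
  moreover have "n / 2 - 1 \<le> real_of_int \<lfloor>n / 2\<rfloor>" by linarith
  moreover have "real (card B) = real (card A) + real d" using b by simp
  ultimately have "99 * n / 200 \<le> real (card B)" and "real d \<le> 2 + n / 50"
    using n_sum small a_lower by linarith+
  then show "99 * real (card V) / 200 \<le> real (card B)"
    and "real d \<le> 2 + real (card V) / 50"
    unfolding n_def by simp_all
qed

theorem proposition6p2:
  "\<exists>eps0 > 0. \<forall>eps3. 0 < eps3 \<and> eps3 \<le> eps0 \<longrightarrow>
     (\<exists>N. \<forall>(V :: nat set) E A B S T (d :: nat).
        digraph V E \<and> card V \<ge> N \<and>
        min_semideg_ge V E (real (card V) / 2) \<and>
        AB_conditions eps3 V E A B S T \<and>
        card B = card A + d \<and> d > 0 \<longrightarrow>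
        (\<exists>M. matching_in E (B \<union> T) B M \<and> finite M \<and> card M = d + 2))"
proof (intro exI[of _ "1/100"] conjI allI impI exI[of _ 200])
  fix eps3 :: real and V :: "nat set" and E A B S T and d :: nat
  assume eps: "0 < eps3 \<and> eps3 \<le> 1/100"
    and G: "digraph V E \<and> 200 \<le> card V \<and> min_semideg_ge V E (real (card V) / 2) \<and>
      AB_conditions eps3 V E A B S T \<and> card B = card A + d \<and> d > 0"
  then have fin: "finite V" and ab: "AB_conditions eps3 V E A B S T"
    and small_eps: "eps3 \<le> 1/100" and n: "200 \<le> card V" and b: "card B = card A + d"
    and d: "1 \<le> d"
    unfolding digraph_def by auto
  from ab b d have part: "partition4 V A B S T" and "card S \<le> card T"
    and tails: "\<And>y. y \<in> B \<union> T \<Longrightarrow> real (outdeg_in E B y) < real (card V) / 20"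
    unfolding AB_conditions_def Let_def by auto
  then have heads: "\<And>x. x \<in> B \<Longrightarrow> real d / 2 \<le> real (indeg_in E (B \<union> T) x)"
    using indeg_from_B_T[OF part fin] G b by blast
  have finBT: "finite B" "finite T"
    using part fin unfolding partition4_def by (auto intro: finite_subset)
  have "real d \<le> 2 + real (card V) / 50" "99 * real (card V) / 200 \<le> real (card B)"
    using AB_conditions_sizes[OF ab fin small_eps n b] by simp_all
  with d n have "\<exists>u v. (u, v) \<in> E \<and> u \<in> B \<union> T \<and> v \<in> B \<and> u \<notin> covered M \<and> v \<notin> covered M"
    if "finite M" "card M < d + 2" for M
    using small_matching_extends[OF finBT heads tails] that by simp
  then show "\<exists>M. matching_in E (B \<union> T) B M \<and> finite M \<and> card M = d + 2"
    by (intro greedy_matching) blast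
qed simp

end
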